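(* Let $(p(N))_{N\in\mathbb N}$ be any sequence in $(\frac12,1)$. Then $$\max_{1\le k\le N}\ \max_{\tau_k(W)\le n<\tau_{k+1}(W)}\big(\log_N k-\log_N W(n)\big)\to0\quad\text{in }\mathbb P_1^{p(N),+}\text{-probability as }N\to\infty.$$
   Context: Let $\mathbb W$ be the set of integer sequences $w=(w(0),w(1),\dots)$ with $w(n+1)-w(n)\in\{-1,1\}$. For $p\in(0,1)$ and $k\in\mathbb Z$, $\mathbb P_k^p$ is the law on $\mathbb W$ of the simple random walk $W$ with $W(0)=k$ stepping $+1$ with probability $p$ and $-1$ with probability $1-p$. $\tau_k(w):=\min\{n\in\mathbb N_0: w(n)=k\}$, $\tau_k^+(w):=\min\{n\in\mathbb N:w(n)=k\}$. For $p>1/2$ and $\ell\in\mathbb N_0$, $\mathbb P_\ell^{p,+}$ denotes $\mathbb P_\ell^p$ conditioned on $\{\tau_0^+(W)=\infty\}$. $\log_N x=\log x/\log N$. *)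

theory Defs
  imports "HOL-Probability.Probability"
begin

text \<open>Step sequences: i.i.d. Bernoulli(p) booleans (True = step +1, False = step -1).\<close>
definition step_space :: "real \<Rightarrow> bool stream measure" where
  "step_space p = stream_space (measure_pmf (bernoulli_pmf p))"

definition walk_of :: "int \<Rightarrow> bool stream \<Rightarrow> nat \<Rightarrow> int" where
  "walk_of k \<omega> n = k + (\<Sum>i<n. if snth \<omega> i then 1 else -1)"

definition walk_law :: "real \<Rightarrow> int \<Rightarrow> (nat \<Rightarrow> int) measure" where
  "walk_law p k = distr (step_space p) (PiM UNIV (\<lambda>_. count_space UNIV)) (walk_of k)"

definition tau :: "int \<Rightarrow> (nat \<Rightarrow> int) \<Rightarrow> enat" where
  "tau k w = (if \<exists>n. w n = k then enat (LEAST n. w n = k) else \<infinity>)"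

definition tau_plus :: "int \<Rightarrow> (nat \<Rightarrow> int) \<Rightarrow> enat" where
  "tau_plus k w = (if \<exists>n\<ge>1. w n = k then enat (LEAST n. n \<ge> 1 \<and> w n = k) else \<infinity>)"

text \<open>The conditioned law P_l^{p,+}: P_l^p conditioned on never returning to 0.\<close>
definition walk_law_plus_prob :: "real \<Rightarrow> int \<Rightarrow> (nat \<Rightarrow> int) set \<Rightarrow> real" where
  "walk_law_plus_prob p l A =
     measure (walk_law p l) (A \<inter> {w. tau_plus 0 w = \<infinity>}) / measure (walk_law p l) {w. tau_plus 0 w = \<infinity>}"

definition maxdev :: "nat \<Rightarrow> (nat \<Rightarrow> int) \<Rightarrow> real" where
  "maxdev N w = (SUP k\<in>{1..N}. SUP n\<in>{n. tau (int k) w \<le> enat n \<and> enat n < tau (int k + 1) w}.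
                  log (real N) (real k) - log (real N) (real_of_int (w n)))"

end

(* Conditioned never to return to 0, the walk started at 1 almost surely passes every level
   k <= N, since staying forever inside (0, N) has probability 0.  If between the first visits
   to k and k + 1 it drops to some level j <= k / N^eps, then it reaches k before 0, next j before
   k + 1, and afterwards avoids 0.  By the strong Markov property and gambler's ruin the first two
   stages have probability at most 1 / (k - j + 1)^2, uniformly in p > 1/2, and avoiding 0 from j
   is at most j times as likely as from 1.  As j / (k - j + 1)^2 <= 4 / (k N^eps), a union bound
   over k bounds the conditioned probability by 4 (1 + ln N) / N^eps. *)

theory Submission
  imports Defs "HOL-Real_Asymp.Real_Asymp"
begin

section \<open>Bernoulli step sequences\<close>

lemma space_step_space [simp]: "space (step_space p) = UNIV"
  by (simp add: step_space_def space_stream_space)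

lemma sets_step_space: "sets (step_space p) = sets (stream_space (count_space UNIV))"
  unfolding step_space_def by (rule sets_stream_space_cong) simp

lemma prob_space_step_space: "prob_space (step_space p)"
  unfolding step_space_def by (rule prob_space.prob_space_stream_space) (rule prob_space_measure_pmf)

lemma measurable_shd_step_space [measurable]: "shd \<in> step_space p \<rightarrow>\<^sub>M count_space UNIV"
  by (subst measurable_cong_sets[OF sets_step_space refl]) measurable

lemma measurable_snth_step_space [measurable]: "(\<lambda>\<omega>. \<omega> !! n) \<in> step_space p \<rightarrow>\<^sub>M count_space UNIV"
  by (subst measurable_cong_sets[OF sets_step_space refl]) measurable

lemma measurable_stake_step_space [measurable]: "stake n \<in> step_space p \<rightarrow>\<^sub>M count_space UNIV"
  by (subst measurable_cong_sets[OF sets_step_space refl]) measurable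

lemma measurable_stl_step_space [measurable]: "stl \<in> step_space p \<rightarrow>\<^sub>M step_space p"
  unfolding step_space_def by measurable

lemma measurable_sdrop_step_space [measurable]: "sdrop n \<in> step_space p \<rightarrow>\<^sub>M step_space p"
  unfolding step_space_def by measurable

lemma Collect_in_step_space: "Measurable.pred (step_space p) P \<Longrightarrow> {\<omega>. P \<omega>} \<in> sets (step_space p)"
  unfolding pred_def by simp

lemma measure_step_space_shd_stl:
  assumes [measurable]: "C \<in> sets (step_space p)"
  shows "measure (step_space p) {\<omega>. shd \<omega> = b \<and> stl \<omega> \<in> C}
       = pmf (bernoulli_pmf p) b * measure (step_space p) C"
proof -
  interpret S: prob_space "step_space p" by (rule prob_space_step_space)
  have "{\<omega>. shd \<omega> = b \<and> stl \<omega> \<in> C} \<in> sets (step_space p)"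
    by (rule Collect_in_step_space) measurable
  then have "emeasure (step_space p) {\<omega>. shd \<omega> = b \<and> stl \<omega> \<in> C}
      = (\<integral>\<^sup>+t. emeasure (step_space p) {\<omega>. t ## \<omega> \<in> {\<omega>. shd \<omega> = b \<and> stl \<omega> \<in> C}} \<partial>bernoulli_pmf p)"
    unfolding step_space_def
    by (subst prob_space.emeasure_stream_space[OF prob_space_measure_pmf]) (simp_all add: space_stream_space)
  also have "\<dots> = (\<integral>\<^sup>+t. emeasure (step_space p) C * indicator {b} t \<partial>bernoulli_pmf p)"
    by (intro nn_integral_cong) (auto split: split_indicator)
  also have "\<dots> = ennreal (measure (step_space p) C * pmf (bernoulli_pmf p) b)"
    by (simp add: nn_integral_cmult_indicator S.emeasure_eq_measure emeasure_pmf_single ennreal_mult)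
  finally show ?thesis
    by (simp add: S.emeasure_eq_measure mult.commute)
qed

lemma measure_step_space_first_step:
  assumes [measurable]: "A \<in> sets (step_space p)" "B \<in> sets (step_space p)"
  shows "measure (step_space p) {\<omega>. if shd \<omega> then stl \<omega> \<in> A else stl \<omega> \<in> B}
       = pmf (bernoulli_pmf p) True * measure (step_space p) A
       + pmf (bernoulli_pmf p) False * measure (step_space p) B"
proof -
  interpret S: prob_space "step_space p" by (rule prob_space_step_space)
  have split: "{\<omega>. if shd \<omega> then stl \<omega> \<in> A else stl \<omega> \<in> B}
      = {\<omega>. shd \<omega> = True \<and> stl \<omega> \<in> A} \<union> {\<omega>. shd \<omega> = False \<and> stl \<omega> \<in> B}"
    by auto
  have event: "{\<omega>. shd \<omega> = b \<and> stl \<omega> \<in> C} \<in> sets (step_space p)"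
    if [measurable]: "C \<in> sets (step_space p)" for b C
    by (rule Collect_in_step_space) measurable
  have "measure (step_space p) {\<omega>. if shd \<omega> then stl \<omega> \<in> A else stl \<omega> \<in> B}
      = measure (step_space p) {\<omega>. shd \<omega> = True \<and> stl \<omega> \<in> A}
      + measure (step_space p) {\<omega>. shd \<omega> = False \<and> stl \<omega> \<in> B}"
    unfolding split by (rule S.finite_measure_Union[OF event[OF assms(1)] event[OF assms(2)]]) auto
  then show ?thesis
    by (simp only: measure_step_space_shd_stl assms)
qed

lemma measure_step_space_stake_sdrop:
  assumes [measurable]: "C \<in> sets (step_space p)"
  shows "measure (step_space p) {\<omega>. stake n \<omega> \<in> X \<and> sdrop n \<omega> \<in> C}
       = measure (step_space p) {\<omega>. stake n \<omega> \<in> X} * measure (step_space p) C"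
proof (induction n arbitrary: X)
  case 0
  interpret S: prob_space "step_space p" by (rule prob_space_step_space)
  show ?case
    by (cases "[] \<in> X") (simp_all add: S.prob_space[unfolded space_step_space])
next
  case (Suc n)
  have events: "{\<omega>. stake n \<omega> \<in> Y \<and> sdrop n \<omega> \<in> C} \<in> sets (step_space p)"
    "{\<omega>. stake n \<omega> \<in> Y} \<in> sets (step_space p)" for Y
    by (rule Collect_in_step_space, measurable)+
  have "{\<omega>. stake (Suc n) \<omega> \<in> X \<and> sdrop (Suc n) \<omega> \<in> C}
      = {\<omega>. if shd \<omega> then stl \<omega> \<in> {\<omega>. stake n \<omega> \<in> (#) True -` X \<and> sdrop n \<omega> \<in> C}
                     else stl \<omega> \<in> {\<omega>. stake n \<omega> \<in> (#) False -` X \<and> sdrop n \<omega> \<in> C}}"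
    "{\<omega>. stake (Suc n) \<omega> \<in> X}
      = {\<omega>. if shd \<omega> then stl \<omega> \<in> {\<omega>. stake n \<omega> \<in> (#) True -` X}
                     else stl \<omega> \<in> {\<omega>. stake n \<omega> \<in> (#) False -` X}}"
    by (auto split: if_splits) (metis (full_types))+
  then show ?case
    by (simp only: measure_step_space_first_step events Suc.IH) (simp add: algebra_simps)
qed

lemma measure_step_space_stopped_sdrop:
  assumes determined: "\<And>n \<omega> \<omega>'. stake n \<omega> = stake n \<omega>' \<Longrightarrow> P n \<omega> \<longleftrightarrow> P n \<omega>'"
    and unique: "\<And>\<omega> n m. P n \<omega> \<Longrightarrow> P m \<omega> \<Longrightarrow> n = m"
    and [measurable]: "C \<in> sets (step_space p)"
  shows "measure (step_space p) {\<omega>. \<exists>n. P n \<omega> \<and> sdrop n \<omega> \<in> C}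
       = measure (step_space p) {\<omega>. \<exists>n. P n \<omega>} * measure (step_space p) C"
proof -
  interpret S: prob_space "step_space p" by (rule prob_space_step_space)
  define X where "X n = stake n ` {\<omega>. P n \<omega>}" for n
  have P_eq: "P n \<omega> \<longleftrightarrow> stake n \<omega> \<in> X n" for n \<omega>
    unfolding X_def using determined by blast
  define A where "A n = {\<omega>. stake n \<omega> \<in> X n \<and> sdrop n \<omega> \<in> C}" for n
  define B where "B n = {\<omega>. stake n \<omega> \<in> X n}" for n
  have [measurable]: "A n \<in> sets (step_space p)" "B n \<in> sets (step_space p)" for n
    unfolding A_def B_def by (rule Collect_in_step_space, measurable)+
  have "disjoint_family A" "disjoint_family B"
    unfolding disjoint_family_on_def A_def B_def P_eq[symmetric] using unique by blast+
  then have "(\<lambda>n. measure (step_space p) (A n)) sums measure (step_space p) (\<Union>n. A n)"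
    "(\<lambda>n. measure (step_space p) (B n) * measure (step_space p) C)
       sums (measure (step_space p) (\<Union>n. B n) * measure (step_space p) C)"
    by (auto intro!: measure_UNION sums_mult2 simp: S.emeasure_eq_measure)
  moreover have "measure (step_space p) (A n) = measure (step_space p) (B n) * measure (step_space p) C" for n
    unfolding A_def B_def by (rule measure_step_space_stake_sdrop) measurable
  ultimately have "measure (step_space p) (\<Union>n. A n) = measure (step_space p) (\<Union>n. B n) * measure (step_space p) C"
    by (simp add: sums_unique2)
  moreover have "(\<Union>n. A n) = {\<omega>. \<exists>n. P n \<omega> \<and> sdrop n \<omega> \<in> C}" "(\<Union>n. B n) = {\<omega>. \<exists>n. P n \<omega>}"
    unfolding A_def B_def P_eq by auto
  ultimately show ?thesis by simp
qed

lemma walk_of_0 [simp]: "walk_of x \<omega> 0 = x"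
  by (simp add: walk_of_def)

lemma walk_of_Suc: "walk_of x \<omega> (Suc n) = walk_of x \<omega> n + (if \<omega> !! n then 1 else -1)"
  by (simp add: walk_of_def)

lemma walk_of_Suc_stl: "walk_of x \<omega> (Suc n) = walk_of (x + (if shd \<omega> then 1 else -1)) (stl \<omega>) n"
  by (simp only: walk_of_def sum.lessThan_Suc_shift snth.simps)

lemma walk_of_sdrop: "walk_of (walk_of x \<omega> a) (sdrop a \<omega>) n = walk_of x \<omega> (a + n)"
  by (induction n) (simp_all add: walk_of_Suc sdrop_snth add.commute)

lemma walk_of_shift: "walk_of (x + y) \<omega> n = walk_of x \<omega> n + y"
  by (simp add: walk_of_def)

lemma walk_of_skip_free: "\<bar>walk_of x \<omega> (Suc n) - walk_of x \<omega> n\<bar> \<le> 1"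
  by (simp add: walk_of_Suc)

lemma walk_of_eq_stake: "walk_of x \<omega> n = x + (\<Sum>i<n. if stake n \<omega> ! i then 1 else -1)"
  unfolding walk_of_def by (auto intro!: sum.cong)

lemma walk_of_stake_eq:
  assumes "stake n \<omega> = stake n \<omega>'" "i \<le> n"
  shows "walk_of x \<omega> i = walk_of x \<omega>' i"
proof -
  have "stake i \<omega> = stake i \<omega>'"
    using assms by (metis min.absorb1 take_stake)
  then show ?thesis
    by (simp only: walk_of_eq_stake)
qed

lemma measurable_walk_of [measurable]: "(\<lambda>\<omega>. walk_of x \<omega> n) \<in> step_space p \<rightarrow>\<^sub>M count_space UNIV"
  unfolding walk_of_eq_stake by measurable

lemma skip_free_hits_up:
  fixes f :: "nat \<Rightarrow> int"
  assumes skip_free: "\<And>i. \<bar>f (Suc i) - f i\<bar> \<le> 1" and "f 0 \<le> c" "c \<le> f n"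
  shows "\<exists>i\<le>n. f i = c"
  using assms(3)
proof (induction n)
  case (Suc n)
  show ?case
  proof (cases "c \<le> f n")
    case True
    then show ?thesis using Suc.IH le_Suc_eq by blast
  next
    case False
    then show ?thesis using skip_free[of n] Suc.prems by (intro exI[of _ "Suc n"]) auto
  qed
qed (use assms(2) in auto)

lemma skip_free_hits_down:
  fixes f :: "nat \<Rightarrow> int"
  assumes "\<And>i. \<bar>f (Suc i) - f i\<bar> \<le> 1" and "c \<le> f 0" "f n \<le> c"
  shows "\<exists>i\<le>n. f i = c"
  using skip_free_hits_up[of "\<lambda>i. - f i" "- c" n] assms by (auto simp: abs_minus_commute)

lemma skip_free_below_until_hit:
  fixes f :: "nat \<Rightarrow> int"
  assumes "\<And>i. \<bar>f (Suc i) - f i\<bar> \<le> 1" and "f 0 \<le> c" and "\<forall>i<a. f i \<noteq> c" and "i < a"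
  shows "f i < c"
proof (rule ccontr)
  assume "\<not> f i < c"
  then obtain i' where "i' \<le> i" "f i' = c"
    using skip_free_hits_up[of f c i] assms(1,2) by force
  then show False using assms(3,4) le_less_trans by blast
qed

lemma tau_eq_enat_iff: "tau c w = enat a \<longleftrightarrow> w a = c \<and> (\<forall>i<a. w i \<noteq> c)"
proof (cases "\<exists>n. w n = c")
  case True
  have "(LEAST n. w n = c) = a \<longleftrightarrow> w a = c \<and> (\<forall>i<a. w i \<noteq> c)"
  proof
    assume least: "(LEAST n. w n = c) = a"
    show "w a = c \<and> (\<forall>i<a. w i \<noteq> c)"
      using LeastI_ex[OF True] not_less_Least[where P = "\<lambda>n. w n = c"] unfolding least by blast
  next
    assume "w a = c \<and> (\<forall>i<a. w i \<noteq> c)"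
    then show "(LEAST n. w n = c) = a"
      by (intro Least_equality) (auto intro: leI)
  qed
  with True show ?thesis by (simp add: tau_def)
next
  case False
  then show ?thesis by (simp add: tau_def)
qed

lemma enat_less_tau_iff: "enat n < tau c w \<longleftrightarrow> (\<forall>i\<le>n. w i \<noteq> c)"
proof (cases "\<exists>n. w n = c")
  case True
  then obtain a where "w a = c" "\<forall>i<a. w i \<noteq> c"
    using exists_least_iff[of "\<lambda>n. w n = c"] by blast
  then have a: "tau c w = enat a" "w a = c" "\<forall>i<a. w i \<noteq> c"
    by (simp_all add: tau_eq_enat_iff)
  show ?thesis
  proof
    assume "enat n < tau c w"
    then have "n < a" using a(1) by simp
    then show "\<forall>i\<le>n. w i \<noteq> c" using a(3) by simp
  next
    assume "\<forall>i\<le>n. w i \<noteq> c"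
    then have "\<not> a \<le> n" using a(2) by blast
    then show "enat n < tau c w" using a(1) by simp
  qed
next
  case False
  then show ?thesis by (simp add: tau_def)
qed

lemma tau_plus_eq_infinity_iff: "tau_plus c w = \<infinity> \<longleftrightarrow> (\<forall>n\<ge>1. w n \<noteq> c)"
  by (simp add: tau_plus_def)

lemma skip_free_tau_less_tau_Suc:
  fixes w :: "nat \<Rightarrow> int"
  assumes skip_free: "\<And>i. \<bar>w (Suc i) - w i\<bar> \<le> 1" and "w 0 \<le> c" and "c \<le> w n"
  shows "\<exists>a. tau c w = enat a \<and> enat a < tau (c + 1) w"
proof -
  have "\<exists>n. w n = c"
    using skip_free_hits_up[of w, OF skip_free \<open>w 0 \<le> c\<close> \<open>c \<le> w n\<close>] by blast
  then obtain a where a: "w a = c" "\<forall>i<a. w i \<noteq> c"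
    using exists_least_iff[of "\<lambda>n. w n = c"] by blast
  have "w i \<noteq> c + 1" if "i \<le> a" for i
  proof (cases "i = a")
    case False
    then have "w i < c"
      using skip_free_below_until_hit[OF skip_free \<open>w 0 \<le> c\<close> a(2)] that by simp
    then show ?thesis by simp
  qed (simp add: a(1))
  then have "tau c w = enat a" "enat a < tau (c + 1) w"
    using a by (simp_all add: tau_eq_enat_iff enat_less_tau_iff)
  then show ?thesis by blast
qed

section \<open>First passages\<close>

definition first_passage :: "int \<Rightarrow> int \<Rightarrow> int set \<Rightarrow> nat \<Rightarrow> bool stream \<Rightarrow> bool" where
  "first_passage x c B n \<omega> \<longleftrightarrow>
     walk_of x \<omega> n = c \<and> (\<forall>i<n. walk_of x \<omega> i \<noteq> c) \<and> (\<forall>i\<le>n. walk_of x \<omega> i \<notin> B)"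

definition passage_then :: "int \<Rightarrow> int \<Rightarrow> int set \<Rightarrow> bool stream set \<Rightarrow> bool stream set" where
  "passage_then x c B C = {\<omega>. \<exists>n. first_passage x c B n \<omega> \<and> sdrop n \<omega> \<in> C}"

lemma measurable_first_passage [measurable]: "Measurable.pred (step_space p) (first_passage x c B n)"
  unfolding first_passage_def by measurable

lemma passage_then_in_sets [measurable]:
  assumes [measurable]: "C \<in> sets (step_space p)"
  shows "passage_then x c B C \<in> sets (step_space p)"
  unfolding passage_then_def by (rule Collect_in_step_space) measurable

lemma first_passage_stake_eq:
  "stake n \<omega> = stake n \<omega>' \<Longrightarrow> first_passage x c B n \<omega> \<longleftrightarrow> first_passage x c B n \<omega>'"
  unfolding first_passage_def using walk_of_stake_eq[of n \<omega> \<omega>'] by auto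

lemma first_passage_unique: "first_passage x c B n \<omega> \<Longrightarrow> first_passage x c B m \<omega> \<Longrightarrow> n = m"
  unfolding first_passage_def by (metis linorder_neqE_nat)

lemma measure_passage_then:
  "C \<in> sets (step_space p) \<Longrightarrow>
   measure (step_space p) (passage_then x c B C)
     = measure (step_space p) (passage_then x c B UNIV) * measure (step_space p) C"
  unfolding passage_then_def
  by (simp add: measure_step_space_stopped_sdrop[OF first_passage_stake_eq first_passage_unique])

lemma not_first_passage_start_in:
  assumes "x \<in> B"
  shows "\<not> first_passage x c B n \<omega>"
proof
  assume "first_passage x c B n \<omega>"
  then have "walk_of x \<omega> 0 \<notin> B" unfolding first_passage_def by blast
  with assms show False by simp
qed

lemma first_passage_0: "first_passage x c B 0 \<omega> \<longleftrightarrow> x = c \<and> x \<notin> B"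
  by (simp add: first_passage_def)

lemma All_le_Suc2: "(\<forall>i\<le>Suc n. P i) \<longleftrightarrow> P 0 \<and> (\<forall>i\<le>n. P (Suc i))"
  using All_less_Suc2[of "Suc n" P] by (simp add: less_Suc_eq_le)

lemma Ex_le_Suc2: "(\<exists>i\<le>Suc n. P i) \<longleftrightarrow> P 0 \<or> (\<exists>i\<le>n. P (Suc i))"
  using Ex_less_Suc2[of "Suc n" P] by (simp add: less_Suc_eq_le)

lemma first_passage_Suc:
  assumes "x \<noteq> c" "x \<notin> B"
  shows "first_passage x c B (Suc n) \<omega> \<longleftrightarrow>
         first_passage (x + (if shd \<omega> then 1 else -1)) c B n (stl \<omega>)"
  unfolding first_passage_def All_less_Suc2 All_le_Suc2 walk_of_Suc_stl walk_of_0 using assms by simp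

definition passage_within :: "nat \<Rightarrow> int \<Rightarrow> int \<Rightarrow> int set \<Rightarrow> bool stream set" where
  "passage_within m x c B = {\<omega>. \<exists>n\<le>m. first_passage x c B n \<omega>}"

lemma passage_within_in_sets [measurable]: "passage_within m x c B \<in> sets (step_space p)"
  unfolding passage_within_def by (rule Collect_in_step_space) measurable

lemma passage_within_Suc:
  assumes "x \<noteq> c" "x \<notin> B"
  shows "passage_within (Suc m) x c B
       = {\<omega>. if shd \<omega> then stl \<omega> \<in> passage_within m (x + 1) c B else stl \<omega> \<in> passage_within m (x - 1) c B}"
proof (intro set_eqI)
  fix \<omega>
  have "\<omega> \<in> passage_within (Suc m) x c B \<longleftrightarrow> stl \<omega> \<in> passage_within m (x + (if shd \<omega> then 1 else -1)) c B"
    unfolding passage_within_def using assms by (simp add: Ex_le_Suc2 first_passage_0 first_passage_Suc)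
  then show "\<omega> \<in> passage_within (Suc m) x c B
      \<longleftrightarrow> \<omega> \<in> {\<omega>. if shd \<omega> then stl \<omega> \<in> passage_within m (x + 1) c B else stl \<omega> \<in> passage_within m (x - 1) c B}"
    by (cases "shd \<omega>") simp_all
qed

lemma measure_passage_within_le_superharmonic:
  fixes \<phi> :: "int \<Rightarrow> real"
  assumes p: "0 \<le> p" "p \<le> 1"
    and superharmonic: "\<And>y. min a b < y \<Longrightarrow> y < max a b \<Longrightarrow> p * \<phi> (y + 1) + (1 - p) * \<phi> (y - 1) \<le> \<phi> y"
    and nonneg: "\<And>y. min a b \<le> y \<Longrightarrow> y \<le> max a b \<Longrightarrow> 0 \<le> \<phi> y"
    and "1 \<le> \<phi> a"
  shows "min a b \<le> x \<Longrightarrow> x \<le> max a b \<Longrightarrow> measure (step_space p) (passage_within m x a {b}) \<le> \<phi> x"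
proof -
  interpret S: prob_space "step_space p" by (rule prob_space_step_space)
  have at_target: "measure (step_space p) (passage_within m a a {b}) \<le> \<phi> a" for m
    using S.prob_le_1[of "passage_within m a a {b}"] \<open>1 \<le> \<phi> a\<close> by linarith
  show "min a b \<le> x \<Longrightarrow> x \<le> max a b \<Longrightarrow> measure (step_space p) (passage_within m x a {b}) \<le> \<phi> x"
  proof (induction m arbitrary: x)
    case 0
    show ?case
    proof (cases "x = a")
      case False
      then have "passage_within 0 x a {b} = {}" by (simp add: passage_within_def first_passage_0)
      then show ?thesis using nonneg 0 by simp
    qed (simp add: at_target)
  next
    case (Suc m)
    consider "x = a" | "x = b" | "x \<noteq> a" "x \<noteq> b" by blast
    then show ?case
    proof cases
      case 1
      then show ?thesis by (simp add: at_target)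
    next
      case 2
      then have "passage_within (Suc m) x a {b} = {}"
        by (simp add: passage_within_def not_first_passage_start_in)
      then show ?thesis using nonneg Suc.prems by simp
    next
      case 3
      then have strict: "min a b < x" "x < max a b"
        using Suc.prems by (auto simp: min_def max_def)
      have "measure (step_space p) (passage_within (Suc m) x a {b})
          = p * measure (step_space p) (passage_within m (x + 1) a {b})
          + (1 - p) * measure (step_space p) (passage_within m (x - 1) a {b})"
        using 3 p by (simp add: passage_within_Suc measure_step_space_first_step passage_within_in_sets)
      also have "\<dots> \<le> p * \<phi> (x + 1) + (1 - p) * \<phi> (x - 1)"
        using Suc.IH[of "x + 1"] Suc.IH[of "x - 1"] strict p
        by (intro add_mono mult_left_mono) simp_all
      also have "\<dots> \<le> \<phi> x"
        using superharmonic strict .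
      finally show ?thesis .
    qed
  qed
qed

lemma measure_passage_le_superharmonic:
  fixes \<phi> :: "int \<Rightarrow> real"
  assumes "0 \<le> p" "p \<le> 1"
    and "\<And>y. min a b < y \<Longrightarrow> y < max a b \<Longrightarrow> p * \<phi> (y + 1) + (1 - p) * \<phi> (y - 1) \<le> \<phi> y"
    and "\<And>y. min a b \<le> y \<Longrightarrow> y \<le> max a b \<Longrightarrow> 0 \<le> \<phi> y"
    and "1 \<le> \<phi> a" and "min a b \<le> x" "x \<le> max a b"
  shows "measure (step_space p) (passage_then x a {b} UNIV) \<le> \<phi> x"
proof -
  interpret S: prob_space "step_space p" by (rule prob_space_step_space)
  have "(\<Union>m. passage_within m x a {b}) = passage_then x a {b} UNIV"
    by (auto simp: passage_within_def passage_then_def)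
  moreover have "incseq (\<lambda>m. passage_within m x a {b})"
    by (rule incseq_SucI) (auto simp: passage_within_def intro: le_SucI)
  ultimately have "(\<lambda>m. measure (step_space p) (passage_within m x a {b}))
      \<longlonglongrightarrow> measure (step_space p) (passage_then x a {b} UNIV)"
    using S.finite_Lim_measure_incseq[of "\<lambda>m. passage_within m x a {b}"] by (simp add: image_subset_iff)
  then show ?thesis
    by (rule LIMSEQ_le_const2) (use measure_passage_within_le_superharmonic[OF assms] in auto)
qed

text \<open>The gambler's-ruin function \<open>(r\<^sup>y - r\<^sup>b) / (r\<^sup>a - r\<^sup>b)\<close>, \<open>r = (1 - p) / p\<close>, is harmonic.\<close>

lemma measure_passage_le_ruin:
  assumes p: "1/2 < p" "p < 1" and "a \<noteq> b" and x: "min a b \<le> x" "x \<le> max a b"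
  defines "r \<equiv> (1 - p) / p"
  shows "measure (step_space p) (passage_then x a {b} UNIV) \<le> (r powi x - r powi b) / (r powi a - r powi b)"
proof (rule measure_passage_le_superharmonic[OF _ _ _ _ _ x])
  have r: "0 < r" "r < 1"
    using p unfolding r_def by (auto simp: field_simps)
  have powi_less: "r powi m < r powi n" if "n < m" for m n :: int
    using power_int_strict_decreasing[OF that r] .
  have powi_le: "r powi m \<le> r powi n" if "n \<le> m" for m n :: int
    using r by (intro power_int_decreasing[OF that]) (simp_all add: less_imp_neq[symmetric])
  have denominator: "r powi a - r powi b \<noteq> 0"
    using powi_less[of a b] powi_less[of b a] \<open>a \<noteq> b\<close>
    by (cases a b rule: linorder_cases) simp_all
  show "0 \<le> p" "p \<le> 1" using p by auto
  show "1 \<le> (r powi a - r powi b) / (r powi a - r powi b)"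
    using denominator by simp
  fix y
  define z where "z = r powi (y - 1)"
  have "r powi (y - 1 + 1) = r powi (y - 1) * r"
    by (rule power_int_add_1) (use r in simp)
  moreover have "r powi (y + 1) = r powi y * r"
    by (rule power_int_add_1) (use r in simp)
  ultimately have powers: "r powi y = z * r" "r powi (y + 1) = z * r * r"
    unfolding z_def by simp_all
  have "p * r powi (y + 1) + (1 - p) * r powi (y - 1) = z * (p * r * r + (1 - p))"
    unfolding powers z_def[symmetric] by (simp add: algebra_simps)
  also have "p * r * r + (1 - p) = r"
    using p unfolding r_def by (simp add: field_simps)
  finally have harmonic: "p * r powi (y + 1) + (1 - p) * r powi (y - 1) = r powi y"
    by (simp only: powers)
  have "p * (r powi (y + 1) - r powi b) + (1 - p) * (r powi (y - 1) - r powi b)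
      = (p * r powi (y + 1) + (1 - p) * r powi (y - 1)) - r powi b"
    by (simp add: algebra_simps)
  also have "\<dots> = r powi y - r powi b"
    by (simp only: harmonic)
  finally have numerator: "p * (r powi (y + 1) - r powi b) + (1 - p) * (r powi (y - 1) - r powi b)
      = r powi y - r powi b" .
  have "p * (u / d) + (1 - p) * (v / d) = (p * u + (1 - p) * v) / d" for u v d :: real
    by (simp add: add_divide_distrib)
  then show "p * ((r powi (y + 1) - r powi b) / (r powi a - r powi b))
      + (1 - p) * ((r powi (y - 1) - r powi b) / (r powi a - r powi b))
      \<le> (r powi y - r powi b) / (r powi a - r powi b)"
    by (simp only: numerator order_refl)
  assume y: "min a b \<le> y" "y \<le> max a b"
  show "0 \<le> (r powi y - r powi b) / (r powi a - r powi b)"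
  proof (cases "a < b")
    case True
    then have "y \<le> b" using y by simp
    then show ?thesis
      using powi_le[of y b] powi_less[OF True] by (simp add: divide_nonneg_pos)
  next
    case False
    then have "b < a" "b \<le> y" using y \<open>a \<noteq> b\<close> by simp_all
    then show ?thesis
      using powi_le[of b y] powi_less[of b a] by (simp add: divide_nonpos_neg)
  qed
qed

section \<open>Avoiding zero\<close>

definition avoids_zero :: "int \<Rightarrow> bool stream set" where
  "avoids_zero x = {\<omega>. \<forall>n. walk_of x \<omega> n \<noteq> 0}"

lemma avoids_zero_in_sets [measurable]: "avoids_zero x \<in> sets (step_space p)"
  unfolding avoids_zero_def by (rule Collect_in_step_space) measurable

lemma avoids_zero_sdrop: "\<omega> \<in> avoids_zero x \<Longrightarrow> sdrop a \<omega> \<in> avoids_zero (walk_of x \<omega> a)"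
  unfolding avoids_zero_def by (simp add: walk_of_sdrop)

lemma avoids_zero_0: "avoids_zero 0 = {}"
  unfolding avoids_zero_def by (metis (mono_tags) empty_Collect_eq walk_of_0)

text \<open>Never visiting \<open>x\<close> from \<open>x + 1\<close> is avoiding \<open>0\<close> from \<open>1\<close>, shifted by \<open>x\<close>.\<close>

lemma avoids_zero_Suc_subset:
  "avoids_zero (x + 1) \<subseteq> avoids_zero 1 \<union> passage_then (x + 1) x {} (avoids_zero x)"
proof
  fix \<omega> assume \<omega>: "\<omega> \<in> avoids_zero (x + 1)"
  show "\<omega> \<in> avoids_zero 1 \<union> passage_then (x + 1) x {} (avoids_zero x)"
  proof (cases "\<exists>n. walk_of (x + 1) \<omega> n = x")
    case False
    have "walk_of 1 \<omega> n \<noteq> 0" for n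
      using False walk_of_shift[of 1 x \<omega> n] by (auto simp: add.commute)
    then show ?thesis by (simp add: avoids_zero_def)
  next
    case True
    then obtain a where a: "walk_of (x + 1) \<omega> a = x" "\<forall>i<a. walk_of (x + 1) \<omega> i \<noteq> x"
      using exists_least_iff[of "\<lambda>n. walk_of (x + 1) \<omega> n = x"] by blast
    then have "first_passage (x + 1) x {} a \<omega>"
      by (simp add: first_passage_def)
    moreover have "sdrop a \<omega> \<in> avoids_zero x"
      using avoids_zero_sdrop[OF \<omega>, of a] a(1) by simp
    ultimately show ?thesis
      unfolding passage_then_def by blast
  qed
qed

lemma measure_avoids_zero_le: "measure (step_space p) (avoids_zero (int j)) \<le> j * measure (step_space p) (avoids_zero 1)"
proof (induction j)
  case 0
  then show ?case by (simp add: avoids_zero_0)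
next
  case (Suc j)
  interpret S: prob_space "step_space p" by (rule prob_space_step_space)
  have "measure (step_space p) (avoids_zero (int j + 1))
      \<le> measure (step_space p) (avoids_zero 1 \<union> passage_then (int j + 1) (int j) {} (avoids_zero (int j)))"
    by (rule S.finite_measure_mono[OF avoids_zero_Suc_subset]) measurable
  also have "\<dots> \<le> measure (step_space p) (avoids_zero 1)
      + measure (step_space p) (passage_then (int j + 1) (int j) {} (avoids_zero (int j)))"
    by (rule measure_subadditive) (simp_all add: S.emeasure_eq_measure)
  also have "measure (step_space p) (passage_then (int j + 1) (int j) {} (avoids_zero (int j)))
      \<le> measure (step_space p) (avoids_zero (int j))"
    unfolding measure_passage_then[OF avoids_zero_in_sets]
    by (intro mult_left_le_one_le measure_nonneg S.prob_le_1)
  finally show ?case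
    using Suc.IH by (simp add: algebra_simps)
qed

section \<open>Confinement to a strip\<close>

lemma measure_initial_up_steps:
  assumes "0 \<le> p" "p \<le> 1"
  shows "measure (step_space p) {\<omega>. \<forall>i<L. \<omega> !! i} = p ^ L"
proof (induction L)
  case 0
  interpret S: prob_space "step_space p" by (rule prob_space_step_space)
  show ?case by (simp add: S.prob_space[unfolded space_step_space])
next
  case (Suc L)
  have "{\<omega>. \<forall>i<L. \<omega> !! i} \<in> sets (step_space p)"
    by (rule Collect_in_step_space) measurable
  have "(\<forall>i<Suc L. \<omega> !! i) \<longleftrightarrow> shd \<omega> = True \<and> stl \<omega> \<in> {\<omega>. \<forall>i<L. \<omega> !! i}" for \<omega>
    unfolding All_less_Suc2 by simp
  then have "{\<omega>. \<forall>i<Suc L. \<omega> !! i} = {\<omega>. shd \<omega> = True \<and> stl \<omega> \<in> {\<omega>. \<forall>i<L. \<omega> !! i}}"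
    by blast
  then show ?case
    by (simp only: measure_step_space_shd_stl[OF \<open>{\<omega>. \<forall>i<L. \<omega> !! i} \<in> sets (step_space p)\<close>] Suc.IH)
      (simp add: assms)
qed

definition stays_between :: "int \<Rightarrow> int \<Rightarrow> int \<Rightarrow> nat \<Rightarrow> bool stream set" where
  "stays_between lo hi x n = {\<omega>. \<forall>i\<le>n. lo < walk_of x \<omega> i \<and> walk_of x \<omega> i < hi}"

lemma stays_between_in_sets [measurable]: "stays_between lo hi x n \<in> sets (step_space p)"
  unfolding stays_between_def by (rule Collect_in_step_space) measurable

text \<open>Within any \<open>L \<ge> hi - lo\<close> further steps, the walk leaves the strip if all of them are up-steps.\<close>

lemma measure_stays_between_add_le:
  assumes p: "0 \<le> p" "p \<le> 1" and L: "hi \<le> lo + int L"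
  shows "measure (step_space p) (stays_between lo hi x (m + L))
       \<le> measure (step_space p) (stays_between lo hi x m) * (1 - p ^ L)"
proof -
  interpret S: prob_space "step_space p" by (rule prob_space_step_space)
  define X where "X = stake m ` stays_between lo hi x m"
  define U where "U = {\<omega>. \<forall>i<L. \<omega> !! i}"
  define C where "C = UNIV - U"
  have U_sets: "U \<in> sets (step_space p)"
    unfolding U_def by (rule Collect_in_step_space) measurable
  then have [measurable]: "C \<in> sets (step_space p)"
    unfolding C_def using sets.compl_sets[OF U_sets] by simp
  have stays_eq: "stays_between lo hi x m = {\<omega>. stake m \<omega> \<in> X}"
  proof (intro set_eqI iffI)
    fix \<omega> assume "\<omega> \<in> {\<omega>. stake m \<omega> \<in> X}"
    then obtain \<omega>' where "\<omega>' \<in> stays_between lo hi x m" "stake m \<omega>' = stake m \<omega>"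
      unfolding X_def by auto
    then show "\<omega> \<in> stays_between lo hi x m"
      unfolding stays_between_def using walk_of_stake_eq[of m \<omega>' \<omega>] by simp
  qed (simp add: X_def)
  have "stays_between lo hi x (m + L) \<subseteq> {\<omega>. stake m \<omega> \<in> X \<and> sdrop m \<omega> \<in> C}"
  proof (intro subsetI CollectI conjI)
    fix \<omega> assume \<omega>: "\<omega> \<in> stays_between lo hi x (m + L)"
    then have "\<omega> \<in> stays_between lo hi x m"
      unfolding stays_between_def by simp
    then show "stake m \<omega> \<in> X"
      unfolding X_def by (rule imageI)
    have "sdrop m \<omega> \<notin> U"
    proof
      assume "sdrop m \<omega> \<in> U"
      then have "walk_of (walk_of x \<omega> m) (sdrop m \<omega>) L = walk_of x \<omega> m + int L"
        unfolding U_def walk_of_def by simp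
      then have "walk_of x \<omega> (m + L) = walk_of x \<omega> m + int L"
        by (simp only: walk_of_sdrop)
      moreover have "lo < walk_of x \<omega> m" "walk_of x \<omega> (m + L) < hi"
        using \<omega> unfolding stays_between_def by simp_all
      ultimately show False using L by linarith
    qed
    then show "sdrop m \<omega> \<in> C" by (simp add: C_def)
  qed
  then have "measure (step_space p) (stays_between lo hi x (m + L))
      \<le> measure (step_space p) {\<omega>. stake m \<omega> \<in> X \<and> sdrop m \<omega> \<in> C}"
    by (intro S.finite_measure_mono Collect_in_step_space) measurable
  also have "\<dots> = measure (step_space p) (stays_between lo hi x m) * measure (step_space p) C"
    unfolding stays_eq by (rule measure_step_space_stake_sdrop) measurable
  also have "measure (step_space p) C = 1 - p ^ L"
    unfolding C_def using S.prob_compl[OF U_sets] measure_initial_up_steps[OF p, of L]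
    by (simp add: U_def)
  finally show ?thesis .
qed

lemma measure_stays_between_forever:
  assumes p: "0 < p" "p \<le> 1"
  shows "measure (step_space p) {\<omega>. \<forall>n. lo < walk_of x \<omega> n \<and> walk_of x \<omega> n < hi} = 0"
proof -
  interpret S: prob_space "step_space p" by (rule prob_space_step_space)
  define L where "L = nat (hi - lo)"
  have L: "hi \<le> lo + int L" unfolding L_def by simp
  have q: "0 \<le> 1 - p ^ L" "1 - p ^ L < 1"
    using p by (simp_all add: power_le_one)
  have block: "measure (step_space p) (stays_between lo hi x (n * L)) \<le> (1 - p ^ L) ^ n" for n
  proof (induction n)
    case (Suc n)
    have "measure (step_space p) (stays_between lo hi x (n * L + L))
        \<le> measure (step_space p) (stays_between lo hi x (n * L)) * (1 - p ^ L)"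
      using p by (intro measure_stays_between_add_le L) simp_all
    also have "\<dots> \<le> (1 - p ^ L) ^ n * (1 - p ^ L)"
      using Suc.IH q by (intro mult_right_mono) simp_all
    finally show ?case by (simp add: add.commute mult.commute)
  qed simp
  have "measure (step_space p) {\<omega>. \<forall>n. lo < walk_of x \<omega> n \<and> walk_of x \<omega> n < hi} \<le> (1 - p ^ L) ^ n" for n
  proof -
    have "{\<omega>. \<forall>n. lo < walk_of x \<omega> n \<and> walk_of x \<omega> n < hi} \<subseteq> stays_between lo hi x (n * L)"
      unfolding stays_between_def by blast
    then show ?thesis
      using S.finite_measure_mono[OF _ stays_between_in_sets] block[of n] by (meson order_trans)
  qed
  moreover have "(\<lambda>n. (1 - p ^ L) ^ n) \<longlonglongrightarrow> 0"
    using q by (intro LIMSEQ_power_zero) simp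
  ultimately show ?thesis
    using measure_nonneg[of "step_space p"] by (meson LIMSEQ_le_const antisym)
qed

lemma sum_power_ge_sqrt:
  fixes r :: real
  assumes "0 < r"
  shows "(real m + 1) * sqrt (r ^ m) \<le> (\<Sum>i\<le>m. r ^ i)"
proof -
  have pair: "2 * sqrt (r ^ m) \<le> r ^ i + r ^ (m - i)" if "i \<le> m" for i
  proof -
    have "sqrt (r ^ m) = sqrt (r ^ i * r ^ (m - i))"
      using that by (simp flip: power_add)
    also have "\<dots> \<le> (r ^ i + r ^ (m - i)) / 2"
      using assms by (intro arith_geo_mean_sqrt) simp_all
    finally show ?thesis by simp
  qed
  have "2 * ((real m + 1) * sqrt (r ^ m)) = (\<Sum>i\<le>m. 2 * sqrt (r ^ m))"
    by simp
  also have "\<dots> \<le> (\<Sum>i\<le>m. r ^ i + r ^ (m - i))"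
    using pair by (intro sum_mono) simp
  also have "\<dots> = 2 * (\<Sum>i\<le>m. r ^ i)"
    using sum.atLeastAtMost_rev[of "\<lambda>i. r ^ i" 0 m] by (simp add: sum.distrib atLeast0AtMost)
  finally show ?thesis by simp
qed

text \<open>The two ruin probabilities of a dip from level \<open>k\<close> to level \<open>j\<close>: their product decays
  quadratically in the depth \<open>k - j\<close>, uniformly in \<open>r\<close>.\<close>

lemma ruin_product_le:
  fixes r :: real
  assumes r: "0 < r" "r < 1" and "1 \<le> j" "j < k"
  shows "(r - 1) / (r ^ k - 1) * ((r ^ k - r ^ (k + 1)) / (r ^ j - r ^ (k + 1))) \<le> 1 / (real (k - j) + 1) ^ 2"
proof -
  define m where "m = k - j"
  define S where "S = (\<Sum>i\<le>m. r ^ i)"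
  have k: "k = j + m" unfolding m_def using \<open>j < k\<close> by simp
  have S_ge: "1 \<le> S"
    unfolding S_def using member_le_sum[of 0 "{..m}" "\<lambda>i. r ^ i"] r by simp
  have geometric: "1 - r ^ (m + 1) = (1 - r) * S"
    unfolding S_def using one_diff_power_eq[of r "m + 1"] by (simp add: lessThan_Suc_atMost)
  have first: "(r - 1) / (r ^ k - 1) \<le> 1 / S"
  proof -
    have "r ^ k \<le> r ^ (m + 1)"
      using r \<open>1 \<le> j\<close> unfolding k by (intro power_decreasing) simp_all
    then have "(1 - r) * S \<le> 1 - r ^ k"
      using geometric by linarith
    moreover have "r ^ k < 1"
      using r \<open>j < k\<close> by (simp add: power_less_one_iff)
    ultimately have "(1 - r) / (1 - r ^ k) \<le> (1 - r) / ((1 - r) * S)"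
      using r S_ge by (intro divide_left_mono) simp_all
    moreover have "(r - 1) / (r ^ k - 1) = (1 - r) / (1 - r ^ k)"
      by (metis minus_diff_eq minus_divide_divide)
    ultimately show ?thesis
      using r by simp
  qed
  have second: "(r ^ k - r ^ (k + 1)) / (r ^ j - r ^ (k + 1)) = r ^ m / S"
  proof -
    have "r ^ k - r ^ (k + 1) = r ^ j * (1 - r) * r ^ m"
      "r ^ j - r ^ (k + 1) = r ^ j * ((1 - r) * S)"
      unfolding k geometric[symmetric] by (simp_all add: power_add algebra_simps)
    then show ?thesis
      using r by simp
  qed
  have "((real m + 1) * sqrt (r ^ m)) ^ 2 \<le> S ^ 2"
    unfolding S_def using sum_power_ge_sqrt[OF r(1)] r by (intro power_mono) simp_all
  then have S_sq: "(real m + 1) ^ 2 * r ^ m \<le> S ^ 2"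
    using r by (simp add: power_mult_distrib)
  have "(r - 1) / (r ^ k - 1) * ((r ^ k - r ^ (k + 1)) / (r ^ j - r ^ (k + 1))) \<le> 1 / S * (r ^ m / S)"
    unfolding second using first r S_ge by (intro mult_right_mono) simp_all
  also have "\<dots> = r ^ m / S ^ 2"
    by (simp add: power2_eq_square)
  also have "\<dots> \<le> r ^ m / ((real m + 1) ^ 2 * r ^ m)"
    using S_sq S_ge r by (intro divide_left_mono) simp_all
  also have "\<dots> = 1 / (real m + 1) ^ 2"
    using r by simp
  finally show ?thesis unfolding m_def .
qed

lemma dip_weight_le:
  fixes y :: real
  assumes "j < k" "real j \<le> real k / y" "2 \<le> y"
  shows "real j / (real (k - j) + 1) ^ 2 \<le> 4 / (real k * y)"
proof -
  have k: "0 < real k" using assms by simp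
  have "real k / y \<le> real k / 2"
    using assms k by (intro divide_left_mono) simp_all
  moreover have "real (k - j) = real k - real j"
    using assms by simp
  ultimately have "real k / 2 \<le> real (k - j) + 1"
    using assms by linarith
  then have depth: "(real k / 2) ^ 2 \<le> (real (k - j) + 1) ^ 2"
    using k by (intro power_mono) simp_all
  have "real j / (real (k - j) + 1) ^ 2 \<le> (real k / y) / (real (k - j) + 1) ^ 2"
    using assms by (intro divide_right_mono) simp_all
  also have "\<dots> \<le> (real k / y) / (real k / 2) ^ 2"
    using depth k assms by (intro divide_left_mono) simp_all
  also have "\<dots> = 4 / (real k * y)"
    using k assms by (simp add: field_simps power2_eq_square)
  finally show ?thesis .
qed

lemma harm_le_one_plus_ln: "1 \<le> N \<Longrightarrow> harm N \<le> 1 + ln (real N)"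
  using decseqD[OF decseq_harm_diff_ln, of 0 "N - 1"] by (simp add: harm_def)

section \<open>Dips below a level\<close>

definition dip_event :: "nat \<Rightarrow> nat \<Rightarrow> bool stream set" where
  "dip_event k j = passage_then 1 (int k) {0} (passage_then (int k) (int j) {int k + 1} (avoids_zero (int j)))"

lemma dip_event_in_sets [measurable]: "dip_event k j \<in> sets (step_space p)"
  unfolding dip_event_def by (intro passage_then_in_sets avoids_zero_in_sets)

lemma measure_dip_event_le:
  assumes p: "1/2 < p" "p < 1" and "1 \<le> j" "j < k"
  shows "measure (step_space p) (dip_event k j)
       \<le> real j / (real (k - j) + 1) ^ 2 * measure (step_space p) (avoids_zero 1)"
proof -
  define r where "r = (1 - p) / p"
  have r: "0 < r" "r < 1"
    using p unfolding r_def by (auto simp: field_simps)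
  define up where "up = measure (step_space p) (passage_then 1 (int k) {0} UNIV)"
  define down where "down = measure (step_space p) (passage_then (int k) (int j) {int k + 1} UNIV)"
  have up_le: "up \<le> (r - 1) / (r ^ k - 1)"
    using measure_passage_le_ruin[OF p, of "int k" 0 1] assms unfolding up_def r_def by simp
  have "int k + 1 = int (k + 1)" by simp
  then have down_le: "down \<le> (r ^ k - r ^ (k + 1)) / (r ^ j - r ^ (k + 1))"
    using measure_passage_le_ruin[OF p, of "int j" "int k + 1" "int k"] assms
    unfolding down_def r_def by (simp only: power_int_of_nat)
  have "up * down \<le> (r - 1) / (r ^ k - 1) * ((r ^ k - r ^ (k + 1)) / (r ^ j - r ^ (k + 1)))"
    using up_le down_le by (intro mult_mono) (auto simp: up_def down_def intro: order_trans[OF measure_nonneg])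
  also have "\<dots> \<le> 1 / (real (k - j) + 1) ^ 2"
    using ruin_product_le[OF r assms(3,4)] .
  finally have product: "up * down \<le> 1 / (real (k - j) + 1) ^ 2" .
  have "measure (step_space p) (dip_event k j) = up * down * measure (step_space p) (avoids_zero (int j))"
    unfolding dip_event_def up_def down_def
    by (simp only: measure_passage_then[OF passage_then_in_sets[OF avoids_zero_in_sets]]
        measure_passage_then[OF avoids_zero_in_sets] mult.assoc)
  also have "\<dots> \<le> up * down * (real j * measure (step_space p) (avoids_zero 1))"
    using measure_avoids_zero_le by (intro mult_left_mono) (simp_all add: up_def down_def)
  also have "\<dots> \<le> 1 / (real (k - j) + 1) ^ 2 * (real j * measure (step_space p) (avoids_zero 1))"
    using product by (intro mult_right_mono) simp_all
  finally show ?thesis by simp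
qed

lemma less_log_diff_iff:
  assumes "1 < b" "0 < x" "0 < y"
  shows "e < log b x - log b y \<longleftrightarrow> y < x / b powr e"
proof -
  have "log b x - log b y = log b (x / y)"
    using assms by (simp add: log_divide)
  then have "e < log b x - log b y \<longleftrightarrow> b powr e < x / y"
    using assms by (simp add: less_log_iff)
  also have "\<dots> \<longleftrightarrow> y < x / b powr e"
    using assms by (simp add: field_simps)
  finally show ?thesis .
qed

lemma maxdev_gt_imp_low_value:
  fixes w :: "nat \<Rightarrow> int"
  assumes "2 \<le> N" and positive: "\<And>n. 1 \<le> w n"
    and levels: "\<And>k. k \<in> {1..N} \<Longrightarrow> \<exists>a. tau (int k) w = enat a \<and> enat a < tau (int k + 1) w"
    and large: "\<epsilon> < \<bar>maxdev N w\<bar>"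
  shows "\<exists>k\<in>{1..N}. \<exists>n. tau (int k) w \<le> enat n \<and> enat n < tau (int k + 1) w
           \<and> real_of_int (w n) < real k / real N powr \<epsilon>"
proof -
  define I where "I k = {n. tau (int k) w \<le> enat n \<and> enat n < tau (int k + 1) w}" for k
  define val where "val k n = log (real N) (real k) - log (real N) (real_of_int (w n))" for k n
  have N: "1 < real N" using \<open>2 \<le> N\<close> by simp
  have maxdev_eq: "maxdev N w = (SUP k\<in>{1..N}. SUP n\<in>I k. val k n)"
    unfolding maxdev_def I_def val_def ..
  have bdd: "bdd_above (val k ` I k)" for k
  proof (rule bdd_aboveI2)
    fix n
    have "0 \<le> log (real N) (real_of_int (w n))"
      using N positive[of n] by simp
    then show "val k n \<le> log (real N) (real k)" unfolding val_def by simp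
  qed
  have inner_nonneg: "I k \<noteq> {} \<and> 0 \<le> (SUP n\<in>I k. val k n)" if k: "k \<in> {1..N}" for k
  proof -
    obtain a where a: "tau (int k) w = enat a" "enat a < tau (int k + 1) w"
      using levels[OF k] by blast
    moreover have "w a = int k"
      using a(1) by (simp add: tau_eq_enat_iff)
    ultimately have "a \<in> I k" "val k a = 0"
      unfolding I_def val_def by simp_all
    then show ?thesis
      using cSUP_upper2[OF bdd] by fastforce
  qed
  have "0 \<le> maxdev N w"
    unfolding maxdev_eq using inner_nonneg[of 1] \<open>2 \<le> N\<close>
    by (intro cSUP_upper2[of "\<lambda>k. SUP n\<in>I k. val k n" "{1..N}" 1]) (simp_all add: bdd_above_finite)
  then have "\<epsilon> < (SUP k\<in>{1..N}. SUP n\<in>I k. val k n)"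
    using large maxdev_eq by simp
  then obtain k where k: "k \<in> {1..N}" "\<epsilon> < (SUP n\<in>I k. val k n)"
    using \<open>2 \<le> N\<close> by (subst (asm) less_cSUP_iff) (auto simp: bdd_above_finite)
  then obtain n where n: "n \<in> I k" "\<epsilon> < val k n"
    using inner_nonneg[OF k(1)] bdd by (subst (asm) less_cSUP_iff) auto
  then have "real_of_int (w n) < real k / real N powr \<epsilon>"
    using less_log_diff_iff[OF N, of "real k" "real_of_int (w n)" \<epsilon>] k(1) positive[of n]
    unfolding val_def by simp
  then show ?thesis
    using k(1) n(1) unfolding I_def by blast
qed

lemma low_value_in_dip_event:
  fixes \<omega> :: "bool stream"
  defines "w \<equiv> walk_of 1 \<omega>"
  assumes \<omega>: "\<omega> \<in> avoids_zero 1"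
    and n: "tau (int k) w \<le> enat n" "enat n < tau (int k + 1) w"
    and "w n \<le> int j" "j < k"
  shows "\<omega> \<in> dip_event k j"
proof -
  obtain a where "tau (int k) w = enat a" "a \<le> n"
    using n(1) by (cases "tau (int k) w") auto
  then have w_a: "w a = int k" "\<forall>i<a. w i \<noteq> int k" and "a \<le> n"
    by (simp_all add: tau_eq_enat_iff)
  have nonzero: "w i \<noteq> 0" for i
    using \<omega> unfolding avoids_zero_def w_def by simp
  have "first_passage 1 (int k) {0} a \<omega>"
    using w_a nonzero unfolding first_passage_def w_def by simp
  moreover define f where "f i = walk_of (int k) (sdrop a \<omega>) i" for i
  have f: "f i = w (a + i)" for i
    unfolding f_def w_def using walk_of_sdrop[of 1 \<omega> a i] w_a(1) by (simp add: w_def)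
  obtain i where "i \<le> n - a" "f i = int j"
    using skip_free_hits_down[of f "int j" "n - a"] walk_of_skip_free f \<open>a \<le> n\<close> \<open>w n \<le> int j\<close> \<open>j < k\<close> w_a(1)
    unfolding f_def by fastforce
  then obtain b where b: "b \<le> n - a" "f b = int j" "\<forall>i<b. f i \<noteq> int j"
    using exists_least_iff[of "\<lambda>i. f i = int j"] by (metis less_le_not_le nle_le order.trans)
  have "first_passage (int k) (int j) {int k + 1} b (sdrop a \<omega>)"
    unfolding first_passage_def f_def[symmetric]
  proof (intro conjI allI impI)
    fix i assume "i \<le> b"
    then have "a + i \<le> n" using b(1) \<open>a \<le> n\<close> by simp
    then show "f i \<notin> {int k + 1}"
      using n(2) f[of i] by (simp add: enat_less_tau_iff)
  qed (use b in simp_all)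
  moreover have "sdrop b (sdrop a \<omega>) \<in> avoids_zero (int j)"
    using avoids_zero_sdrop[OF avoids_zero_sdrop[OF \<omega>, of a], of b] b(2) w_a(1)
    unfolding f_def w_def by simp
  ultimately show ?thesis
    unfolding dip_event_def passage_then_def by blast
qed

lemma avoids_zero_1_positive: "\<omega> \<in> avoids_zero 1 \<Longrightarrow> 1 \<le> walk_of 1 \<omega> n"
proof (rule ccontr)
  assume "\<omega> \<in> avoids_zero 1" "\<not> 1 \<le> walk_of 1 \<omega> n"
  moreover have "\<exists>i\<le>n. walk_of 1 \<omega> i = 0"
    using calculation(2) by (intro skip_free_hits_down walk_of_skip_free) simp_all
  ultimately show False
    unfolding avoids_zero_def by blast
qed

lemma large_maxdev_subset:
  assumes "2 \<le> N" "0 < \<epsilon>"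
  defines "J k \<equiv> nat \<lfloor>real k / real N powr \<epsilon>\<rfloor>"
  shows "{\<omega> \<in> avoids_zero 1. \<epsilon> < \<bar>maxdev N (walk_of 1 \<omega>)\<bar>}
       \<subseteq> {\<omega>. \<forall>n. 0 < walk_of 1 \<omega> n \<and> walk_of 1 \<omega> n < int N}
         \<union> (\<Union>k\<in>{k\<in>{1..N}. 1 \<le> J k}. dip_event k (J k))"
proof (intro subsetI)
  fix \<omega> assume "\<omega> \<in> {\<omega> \<in> avoids_zero 1. \<epsilon> < \<bar>maxdev N (walk_of 1 \<omega>)\<bar>}"
  then have \<omega>: "\<omega> \<in> avoids_zero 1" and large: "\<epsilon> < \<bar>maxdev N (walk_of 1 \<omega>)\<bar>" by simp_all
  define w where "w = walk_of 1 \<omega>"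
  have positive: "1 \<le> w n" for n
    unfolding w_def by (rule avoids_zero_1_positive[OF \<omega>])
  show "\<omega> \<in> {\<omega>. \<forall>n. 0 < walk_of 1 \<omega> n \<and> walk_of 1 \<omega> n < int N} \<union> (\<Union>k\<in>{k\<in>{1..N}. 1 \<le> J k}. dip_event k (J k))"
  proof (cases "\<exists>m. int N \<le> w m")
    case False
    then show ?thesis
      using positive unfolding w_def by (simp add: not_le order_less_le_trans[OF zero_less_one])
  next
    case True
    then obtain m where "int N \<le> w m" by blast
    have levels: "\<exists>a. tau (int k) w = enat a \<and> enat a < tau (int k + 1) w" if "k \<in> {1..N}" for k
    proof (rule skip_free_tau_less_tau_Suc)
      show "\<bar>w (Suc i) - w i\<bar> \<le> 1" for i
        unfolding w_def by (rule walk_of_skip_free)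
      show "w 0 \<le> int k" "int k \<le> w m"
        using that \<open>int N \<le> w m\<close> by (simp_all add: w_def)
    qed
    have "\<epsilon> < \<bar>maxdev N w\<bar>"
      using large by (simp add: w_def)
    then obtain k n where k: "k \<in> {1..N}" and n: "tau (int k) w \<le> enat n" "enat n < tau (int k + 1) w"
      and low: "real_of_int (w n) < real k / real N powr \<epsilon>"
      using maxdev_gt_imp_low_value[of N w, OF \<open>2 \<le> N\<close> positive levels] by blast
    have "w n \<le> int (J k)"
      using low positive[of n] unfolding J_def by (simp add: le_floor_iff)
    moreover have "real k / real N powr \<epsilon> < real k"
      using k \<open>2 \<le> N\<close> \<open>0 < \<epsilon>\<close> by (simp add: divide_less_eq)
    then have "J k < k"
      unfolding J_def by (simp add: nat_less_iff floor_less_iff)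
    ultimately have "\<omega> \<in> dip_event k (J k)" "1 \<le> J k"
      using low_value_in_dip_event[OF \<omega>] n positive[of n] unfolding w_def by simp_all
    then show ?thesis
      using k by blast
  qed
qed

section \<open>The conditioned law\<close>

lemma measurable_walk_of_PiM:
  "walk_of x \<in> step_space p \<rightarrow>\<^sub>M PiM UNIV (\<lambda>_. count_space UNIV)"
proof -
  have "(\<lambda>\<omega> n. walk_of x \<omega> n) \<in> step_space p \<rightarrow>\<^sub>M PiM UNIV (\<lambda>_. count_space UNIV)"
    by (rule measurable_PiM_single') simp_all
  then show ?thesis by simp
qed

lemma avoids_zero_1_iff: "\<omega> \<in> avoids_zero 1 \<longleftrightarrow> (\<forall>n\<ge>1. walk_of 1 \<omega> n \<noteq> 0)"
proof
  assume nonzero: "\<forall>n\<ge>1. walk_of 1 \<omega> n \<noteq> 0"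
  have "walk_of 1 \<omega> n \<noteq> 0" for n
    using nonzero[rule_format, of n] by (cases n) simp_all
  then show "\<omega> \<in> avoids_zero 1" by (simp add: avoids_zero_def)
qed (simp add: avoids_zero_def)

lemma measure_walk_law_le:
  assumes "S \<in> sets (step_space p)" "\<And>\<omega>. walk_of x \<omega> \<in> A \<Longrightarrow> \<omega> \<in> S"
  shows "measure (walk_law p x) A \<le> measure (step_space p) S"
proof (cases "A \<in> sets (PiM UNIV (\<lambda>_. count_space UNIV))")
  case True
  interpret S: prob_space "step_space p" by (rule prob_space_step_space)
  have "measure (walk_law p x) A = measure (step_space p) (walk_of x -` A)"
    unfolding walk_law_def using measure_distr[OF measurable_walk_of_PiM True] by simp
  also have "\<dots> \<le> measure (step_space p) S"
    using assms by (intro S.finite_measure_mono) auto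
  finally show ?thesis .
next
  case False
  then show ?thesis
    by (simp add: walk_law_def measure_notin_sets)
qed

lemma measure_walk_law_never_returns:
  "measure (walk_law p 1) {w. tau_plus 0 w = \<infinity>} = measure (step_space p) (avoids_zero 1)"
proof -
  have "{w :: nat \<Rightarrow> int. tau_plus 0 w = \<infinity>} = {w \<in> space (PiM UNIV (\<lambda>_. count_space UNIV)). \<forall>n\<ge>1. w n \<noteq> 0}"
    by (simp add: tau_plus_eq_infinity_iff space_PiM)
  also have "\<dots> \<in> sets (PiM UNIV (\<lambda>_. count_space UNIV))"
    by measurable
  finally have "measure (walk_law p 1) {w. tau_plus 0 w = \<infinity>}
      = measure (step_space p) (walk_of 1 -` {w. tau_plus 0 w = \<infinity>})"
    unfolding walk_law_def using measure_distr[OF measurable_walk_of_PiM] by simp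
  also have "walk_of 1 -` {w. tau_plus 0 w = \<infinity>} = avoids_zero 1"
    by (auto simp: avoids_zero_1_iff tau_plus_eq_infinity_iff)
  finally show ?thesis .
qed

lemma measure_dip_event_floor_le:
  assumes p: "1/2 < p" "p < 1" and "1 \<le> k" "2 \<le> y"
  defines "j \<equiv> nat \<lfloor>real k / y\<rfloor>"
  assumes "1 \<le> j"
  shows "measure (step_space p) (dip_event k j) \<le> 4 / (real k * y) * measure (step_space p) (avoids_zero 1)"
proof -
  have "real j \<le> real k / y"
    unfolding j_def using \<open>2 \<le> y\<close> by (simp add: of_nat_floor)
  moreover have "real k / y < real k"
    using \<open>1 \<le> k\<close> \<open>2 \<le> y\<close> by (simp add: divide_less_eq)
  ultimately have "j < k" by linarith
  have "measure (step_space p) (dip_event k j)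
      \<le> real j / (real (k - j) + 1) ^ 2 * measure (step_space p) (avoids_zero 1)"
    by (rule measure_dip_event_le[OF p \<open>1 \<le> j\<close> \<open>j < k\<close>])
  also have "\<dots> \<le> 4 / (real k * y) * measure (step_space p) (avoids_zero 1)"
    by (intro mult_right_mono dip_weight_le[OF \<open>j < k\<close> \<open>real j \<le> real k / y\<close> \<open>2 \<le> y\<close>] measure_nonneg)
  finally show ?thesis .
qed

lemma measure_large_maxdev_le:
  assumes p: "1/2 < p" "p < 1" and "2 \<le> N" "0 < \<epsilon>" "2 \<le> real N powr \<epsilon>"
  shows "measure (walk_law p 1) ({w. \<epsilon> < \<bar>maxdev N w\<bar>} \<inter> {w. tau_plus 0 w = \<infinity>})
       \<le> 4 * (1 + ln (real N)) / real N powr \<epsilon> * measure (step_space p) (avoids_zero 1)"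
proof -
  interpret S: prob_space "step_space p" by (rule prob_space_step_space)
  define D where "D = measure (step_space p) (avoids_zero 1)"
  define J where "J k = nat \<lfloor>real k / real N powr \<epsilon>\<rfloor>" for k
  define K where "K = {k \<in> {1..N}. 1 \<le> J k}"
  define Z where "Z = {\<omega>. \<forall>n. 0 < walk_of 1 \<omega> n \<and> walk_of 1 \<omega> n < int N}"
  have [measurable]: "Z \<in> sets (step_space p)"
    unfolding Z_def by (rule Collect_in_step_space) measurable
  have null: "measure (step_space p) Z = 0"
    unfolding Z_def using p by (intro measure_stays_between_forever) simp_all
  have "measure (walk_law p 1) ({w. \<epsilon> < \<bar>maxdev N w\<bar>} \<inter> {w. tau_plus 0 w = \<infinity>})
      \<le> measure (step_space p) (Z \<union> (\<Union>k\<in>K. dip_event k (J k)))"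
  proof (rule measure_walk_law_le)
    fix \<omega> assume "walk_of 1 \<omega> \<in> {w. \<epsilon> < \<bar>maxdev N w\<bar>} \<inter> {w. tau_plus 0 w = \<infinity>}"
    then have "\<omega> \<in> {\<omega> \<in> avoids_zero 1. \<epsilon> < \<bar>maxdev N (walk_of 1 \<omega>)\<bar>}"
      by (simp add: avoids_zero_1_iff tau_plus_eq_infinity_iff)
    then show "\<omega> \<in> Z \<union> (\<Union>k\<in>K. dip_event k (J k))"
      using large_maxdev_subset[OF \<open>2 \<le> N\<close> \<open>0 < \<epsilon>\<close>] unfolding Z_def K_def J_def by blast
  qed (unfold K_def, measurable)
  also have "\<dots> \<le> measure (step_space p) Z + measure (step_space p) (\<Union>k\<in>K. dip_event k (J k))"
    by (rule measure_subadditive) (simp_all add: S.emeasure_eq_measure K_def)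
  also have "\<dots> = measure (step_space p) (\<Union>k\<in>K. dip_event k (J k))"
    using null by simp
  also have "\<dots> \<le> (\<Sum>k\<in>K. measure (step_space p) (dip_event k (J k)))"
    by (rule S.finite_measure_subadditive_finite) (auto simp: K_def)
  also have "\<dots> \<le> (\<Sum>k\<in>K. 4 / real N powr \<epsilon> * D * (1 / real k))"
    using measure_dip_event_floor_le[OF p _ \<open>2 \<le> real N powr \<epsilon>\<close>]
    by (intro sum_mono) (simp add: K_def J_def D_def mult.commute)
  also have "\<dots> \<le> (\<Sum>k\<in>{1..N}. 4 / real N powr \<epsilon> * D * (1 / real k))"
    by (intro sum_mono2) (auto simp: K_def D_def)
  also have "\<dots> = 4 / real N powr \<epsilon> * D * harm N"
    unfolding sum_distrib_left[symmetric] harm_def by (simp add: inverse_eq_divide)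
  also have "\<dots> \<le> 4 / real N powr \<epsilon> * D * (1 + ln (real N))"
    using harm_le_one_plus_ln[of N] \<open>2 \<le> N\<close> by (intro mult_left_mono) (simp_all add: D_def)
  also have "\<dots> = 4 * (1 + ln (real N)) / real N powr \<epsilon> * D"
    by (simp add: ac_simps)
  finally show ?thesis
    unfolding D_def .
qed

lemma walk_law_plus_prob_maxdev_le:
  assumes "1/2 < p" "p < 1" and "2 \<le> N" "0 < \<epsilon>" "2 \<le> real N powr \<epsilon>"
  shows "walk_law_plus_prob p 1 {w. \<epsilon> < \<bar>maxdev N w\<bar>} \<le> 4 * (1 + ln (real N)) / real N powr \<epsilon>"
proof -
  define D where "D = measure (step_space p) (avoids_zero 1)"
  have "0 \<le> 4 * (1 + ln (real N)) / real N powr \<epsilon>" "0 \<le> D"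
    using \<open>2 \<le> N\<close> by (simp_all add: D_def)
  then show ?thesis
    using measure_large_maxdev_le[OF assms]
    unfolding walk_law_plus_prob_def measure_walk_law_never_returns D_def[symmetric]
    by (cases "D = 0") (simp_all add: divide_le_eq)
qed

theorem corollaryA7:
  fixes p :: "nat \<Rightarrow> real"
  assumes "\<And>N. 1/2 < p N \<and> p N < 1"
  shows "\<forall>\<epsilon>>0. (\<lambda>N. walk_law_plus_prob (p N) 1 {w. \<bar>maxdev N w\<bar> > \<epsilon>}) \<longlonglongrightarrow> 0"
proof (intro allI impI)
  fix \<epsilon> :: real assume "\<epsilon> > 0"
  define bound where "bound N = 4 * (1 + ln (real N)) / real N powr \<epsilon>" for N :: nat
  have "eventually (\<lambda>N::nat. 2 \<le> real N powr \<epsilon>) sequentially"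
    using \<open>\<epsilon> > 0\<close> by real_asymp
  then have "eventually (\<lambda>N. 2 \<le> N \<and> 2 \<le> real N powr \<epsilon>) sequentially"
    by (rule eventually_conj[OF eventually_ge_at_top])
  then have upper: "eventually (\<lambda>N. walk_law_plus_prob (p N) 1 {w. \<bar>maxdev N w\<bar> > \<epsilon>} \<le> bound N) sequentially"
    unfolding bound_def
    by (rule eventually_mono) (rule walk_law_plus_prob_maxdev_le, use assms \<open>\<epsilon> > 0\<close> in simp_all)
  have lim: "bound \<longlonglongrightarrow> 0"
    unfolding bound_def using \<open>\<epsilon> > 0\<close> by real_asymp
  have lower: "eventually (\<lambda>N. 0 \<le> walk_law_plus_prob (p N) 1 {w. \<bar>maxdev N w\<bar> > \<epsilon>}) sequentially"
    by (simp add: walk_law_plus_prob_def)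
  show "(\<lambda>N. walk_law_plus_prob (p N) 1 {w. \<bar>maxdev N w\<bar> > \<epsilon>}) \<longlonglongrightarrow> 0"
    by (rule tendsto_sandwich[OF lower upper tendsto_const lim])
qed

end
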